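(* Let $R$ be a Bézout domain and let $A,B,C\in R^{n\times n}$ satisfy $ABA=ACA$. If $R_r(AB)=R_r(ABA)$ and $R_r(CA)=R_r(CAB)$, then $AB$ is similar to $CA$.
   Context: A Bézout domain is an integral domain in which every finitely generated ideal is principal. For $M\in R^{m\times n}$, $R_r(M)=\{Mx : x\in R^{n\times 1}\}\subseteq R^{m\times 1}$ is the column space of $M$. Two matrices $M,N\in R^{n\times n}$ are similar if $M=S^{-1}NS$ for some invertible $S\in R^{n\times n}$. *)

theory Defs
  imports "HOL-Analysis.Analysis"
begin

definition bezout_domain :: "'a::idom itself \<Rightarrow> bool" where
  "bezout_domain _ \<longleftrightarrow>
     (\<forall>F::'a set. finite F \<longrightarrow>
        (\<exists>d. {(\<Sum>x\<in>F. c x * x) | c. True} = {d * r | r. True}))"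

definition col_space :: "'a::semiring_1 ^'n^'m \<Rightarrow> ('a^'m) set" where
  "col_space M = {M *v x | x. True}"

definition similar_matrix :: "'a::semiring_1 ^'n^'n \<Rightarrow> 'a^'n^'n \<Rightarrow> bool" where
  "similar_matrix M N \<longleftrightarrow>
     (\<exists>S Sinv. S ** Sinv = mat 1 \<and> Sinv ** S = mat 1 \<and> M = Sinv ** N ** S)"

end

(*
  Write P = AB and Q = CA. The column-space hypotheses give P = PAX and Q = QBY, and ABA = ACA
  gives PA = AQ; hence P = P\<^sup>2(YX) and Q = Q\<^sup>2(XY). Over an integral domain this makes P and Q
  group invertible (compare kernels over the fraction field). With E = PP\<^sup>\<sharp> and F = QQ\<^sup>\<sharp>, the
  matrices \<alpha> = AF and \<beta> = QXP\<^sup>\<sharp> satisfy \<alpha>\<beta> = E, \<beta>\<alpha> = F and P\<alpha> = \<alpha>Q, so \<alpha> is an isomorphism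
  from the image of F onto the image of E intertwining Q with P. Over a Bezout domain a unimodular
  vector can be moved to a coordinate vector by an invertible matrix, so every idempotent matrix is
  similar to a diagonal 0/1 matrix; comparing the complementary coordinates then extends \<alpha> to an
  invertible T with ET = \<alpha> = TF, and TQ = PT.
*)

theory Submission
  imports Defs "HOL-Computational_Algebra.Polynomial_Factorial"
begin

lemma sum_UNIV_single:
  assumes "\<And>k. k \<noteq> i \<Longrightarrow> f k = 0"
  shows "(\<Sum>k\<in>(UNIV::'n::finite set). f k) = (f i :: 'a::comm_monoid_add)"
  using assms by (subst sum.mono_neutral_right[of UNIV "{i}"]) auto

lemma sum_UNIV_pair:
  assumes "i \<noteq> j" and "\<And>k. k \<noteq> i \<Longrightarrow> k \<noteq> j \<Longrightarrow> f k = 0"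
  shows "(\<Sum>k\<in>(UNIV::'n::finite set). f k) = f i + (f j :: 'a::comm_monoid_add)"
  using assms by (subst sum.mono_neutral_right[of UNIV "{i, j}"]) auto

lemma matrix_matrix_mult_nth:
  "((A::'a::semiring_1^'n^'m) ** B) $ i $ j = (\<Sum>k\<in>UNIV. A $ i $ k * B $ k $ j)"
  by (simp add: matrix_matrix_mult_def)

lemma matrix_vector_mult_axis_nth: "((M::'a::semiring_1^'n::finite^'m) *v axis j 1) $ i = M $ i $ j"
  unfolding matrix_vector_mult_def by (subst sum_UNIV_single[of j]) (auto simp: axis_def)

lemma matrix_add_rdistrib: "((A::'a::semiring_1^'n^'m) + B) ** C = A ** C + B ** C"
  by (simp add: vec_eq_iff matrix_matrix_mult_nth distrib_right sum.distrib)

lemma matrix_diff_ldistrib: "(A::'a::ring_1^'n^'m) ** (B - C) = A ** B - A ** C"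
  by (simp add: vec_eq_iff matrix_matrix_mult_nth right_diff_distrib sum_subtractf)

lemma matrix_diff_rdistrib: "((A::'a::ring_1^'n^'m) - B) ** C = A ** C - B ** C"
  by (simp add: vec_eq_iff matrix_matrix_mult_nth left_diff_distrib sum_subtractf)

lemma matrix_mul_inverse_mult:
  "A ** A' = mat 1 \<Longrightarrow> B ** B' = mat 1 \<Longrightarrow> A ** B ** (B' ** A') = (mat 1 :: 'a::semiring_1^'n^'n)"
  by (metis matrix_mul_assoc matrix_mul_rid)

lemma matrix_mul_inverse_cancel:
  "A ** B = mat 1 \<Longrightarrow> X ** A ** B = (X :: 'a::semiring_1^'n::finite^'n)"
  by (metis matrix_mul_assoc matrix_mul_rid)

lemma matrix_mul_conj_cancel:
  "W' ** W = mat 1 \<Longrightarrow>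
    V ** X ** W' ** (W ** Y ** U) = V ** (X ** Y) ** (U :: 'a::semiring_1^'n::finite^'n)"
  by (metis matrix_mul_assoc matrix_mul_rid)

lemma col_space_subset_imp_factor:
  fixes P :: "'a::semiring_1^'n::finite^'m" and N :: "'a^'k::finite^'m"
  assumes "col_space P \<subseteq> col_space N"
  shows "\<exists>X. P = N ** X"
proof -
  have "\<forall>j. \<exists>x. P *v axis j 1 = N *v x"
    using assms unfolding col_space_def by blast
  then obtain f where f: "\<And>j. P *v axis j 1 = N *v f j"
    by metis
  have "(N ** (\<chi> i j. f j $ i)) $ i $ j = P $ i $ j" for i j
    using arg_cong[OF f[of j], of "\<lambda>v. v $ i"] unfolding matrix_vector_mult_axis_nth
    by (simp add: matrix_matrix_mult_nth matrix_vector_mult_def)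
  then show ?thesis
    by (metis vec_eq_iff)
qed

lemma similar_matrix_refl: "similar_matrix M (M :: 'a::semiring_1^'n::finite^'n)"
  unfolding similar_matrix_def by (intro exI[of _ "mat 1"]) simp

lemma similar_matrix_conj:
  "U ** U' = mat 1 \<Longrightarrow> U' ** U = mat 1 \<Longrightarrow> similar_matrix (U ** M ** U') M"
  unfolding similar_matrix_def by blast

lemma similar_matrix_sym:
  fixes M N :: "'a::semiring_1^'n::finite^'n"
  assumes "similar_matrix M N"
  shows "similar_matrix N M"
proof -
  obtain S S' where S: "S ** S' = mat 1" "S' ** S = mat 1" "M = S' ** N ** S"
    using assms unfolding similar_matrix_def by blast
  then have "N = S ** M ** S'"
    by (simp add: matrix_mul_assoc) (simp flip: matrix_mul_assoc)
  with S show ?thesis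
    unfolding similar_matrix_def by blast
qed

lemma similar_matrix_trans:
  fixes M N K :: "'a::semiring_1^'n::finite^'n"
  assumes "similar_matrix M N" and "similar_matrix N K"
  shows "similar_matrix M K"
proof -
  obtain S S' where S: "S ** S' = mat 1" "S' ** S = mat 1" "M = S' ** N ** S"
    using assms(1) unfolding similar_matrix_def by blast
  obtain T T' where T: "T ** T' = mat 1" "T' ** T = mat 1" "N = T' ** K ** T"
    using assms(2) unfolding similar_matrix_def by blast
  have "M = (S' ** T') ** K ** (T ** S)"
    using S(3) T(3) by (simp add: matrix_mul_assoc)
  moreover have "T ** S ** (S' ** T') = mat 1" "S' ** T' ** (T ** S) = mat 1"
    using S T by (simp_all add: matrix_mul_inverse_mult)
  ultimately show ?thesis
    unfolding similar_matrix_def by blast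
qed

lemma similar_matrix_idempotent:
  fixes M N :: "'a::semiring_1^'n::finite^'n"
  assumes "similar_matrix M N" and "N ** N = N"
  shows "M ** M = M"
proof -
  obtain S S' where S: "S ** S' = mat 1" "M = S' ** N ** S"
    using assms(1) unfolding similar_matrix_def by blast
  have "M ** M = S' ** (N ** (S ** S') ** N) ** S"
    using S(2) by (simp add: matrix_mul_assoc)
  also have "\<dots> = M"
    using S assms(2) by simp
  finally show ?thesis .
qed

definition diag_matrix :: "('n \<Rightarrow> 'a::semiring_1) \<Rightarrow> 'a^'n^'n" where
  "diag_matrix f = (\<chi> i j. if i = j then f i else 0)"

lemma diag_matrix_mult_left: "diag_matrix f ** M = (\<chi> i j. f i * M $ i $ j)"
  by (simp add: vec_eq_iff matrix_matrix_mult_nth diag_matrix_def if_distrib[of "\<lambda>x. x * _"] cong: if_cong)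

lemma diag_matrix_mult_right: "M ** diag_matrix f = (\<chi> i j. M $ i $ j * f j)"
  by (simp add: vec_eq_iff matrix_matrix_mult_nth diag_matrix_def if_distrib[of "\<lambda>x. _ * x"] cong: if_cong)

lemma diag_matrix_mult_vector: "diag_matrix f *v v = (\<chi> i. f i * v $ i)"
  by (simp add: vec_eq_iff matrix_vector_mult_def diag_matrix_def if_distrib[of "\<lambda>x. x * _"] cong: if_cong)

lemma diag_matrix_mult:
  "diag_matrix f ** diag_matrix g = (diag_matrix (\<lambda>i. f i * g i) :: 'a::semiring_1^'n::finite^'n)"
  by (simp add: diag_matrix_mult_left) (simp add: diag_matrix_def vec_eq_iff)

lemma diag_matrix_one: "diag_matrix (\<lambda>_. 1) = mat 1"
  by (simp add: vec_eq_iff diag_matrix_def mat_def)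

definition coord_proj :: "'n set \<Rightarrow> 'a::semiring_1^'n^'n" where
  "coord_proj S = diag_matrix (\<lambda>i. of_bool (i \<in> S))"

section \<open>Group inverses over integral domains\<close>

lemma to_fract_sum: "to_fract (sum f A) = (\<Sum>x\<in>A. to_fract (f x))"
  by (induction A rule: infinite_finite_induct) simp_all

lemma map_matrix_to_fract_mult:
  "map_matrix to_fract (A ** B) =
    map_matrix to_fract A ** map_matrix to_fract (B :: 'a::idom^'n::finite^'k::finite)"
  by (simp add: vec_eq_iff matrix_matrix_mult_nth to_fract_sum)

lemma map_matrix_to_fract_eq_iff: "map_matrix to_fract A = map_matrix to_fract B \<longleftrightarrow> A = B"
  by (simp add: vec_eq_iff)

lemma map_matrix_to_fract_mat: "map_matrix to_fract (mat c) = mat (to_fract c)"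
  by (simp add: vec_eq_iff mat_def)

lemma map_matrix_to_fract_0: "map_matrix to_fract 0 = 0"
  by (simp add: vec_eq_iff)

lemma matrix_left_right_inverse_idom:
  fixes A B :: "'a::idom^'n^'n"
  shows "A ** B = mat 1 \<longleftrightarrow> B ** A = mat 1"
  using matrix_left_right_inverse[of "map_matrix to_fract A" "map_matrix to_fract B"]
  by (metis map_matrix_to_fract_mult map_matrix_to_fract_mat map_matrix_to_fract_eq_iff to_fract_1)

text \<open>Over a field, \<open>M = M\<^sup>2 W\<close> makes \<open>M\<close> map its own image onto itself; by finite
  dimension it is then injective there, so \<open>M\<close> and \<open>M\<^sup>2\<close> have the same kernel.\<close>

lemma matrix_square_kernel_field:
  fixes M W :: "'k::field^'n^'n"
  assumes MW: "M = M ** M ** W" and "M *v (M *v z) = 0"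
  shows "M *v z = 0"
proof -
  define f where "f = (\<lambda>x. M *v x)"
  have lf: "Vector_Spaces.linear (*s) (*s) f"
    unfolding f_def by (rule matrix_vector_mul_linear_gen)
  obtain B where B: "B \<subseteq> range f" "vec.independent B" "range f \<subseteq> vec.span B"
    "card B = vec.dim (range f)"
    using vec.basis_exists by blast
  have fB: "finite B"
    using B(2) vec.finiteI_independent by auto
  have onto: "range f \<subseteq> vec.span (f ` B)"
  proof
    fix y assume "y \<in> range f"
    then obtain x where y: "y = f (f (W *v x))"
      unfolding f_def by (metis MW matrix_vector_mul_assoc rangeE)
    have "f (W *v x) \<in> vec.span B"
      using B(3) by auto
    then have "y \<in> f ` vec.span B"
      using y by blast
    then show "y \<in> vec.span (f ` B)"
      using vec.linear_span_image[OF lf] by simp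
  qed
  have fB_sub: "f ` B \<subseteq> range f"
    by auto
  have indep: "vec.independent (f ` B)"
    by (rule vec.card_le_dim_spanning[OF fB_sub onto]) (use fB B(4) card_image_le[OF fB, of f] in auto)
  have "vec.dim (range f) \<le> card (f ` B)"
    by (rule vec.span_card_ge_dim[OF fB_sub onto]) (use fB in auto)
  then have "card (f ` B) = card B"
    using card_image_le[OF fB, of f] B(4) by arith
  then have inj: "inj_on f B"
    by (simp add: eq_card_imp_inj_on fB)
  have "f z \<in> vec.span B" "f (f z) = 0"
    using B(3) assms(2) by (auto simp: f_def)
  then have "f z = 0"
    using vec.linear_indep_image_lemma[OF lf fB indep inj] by blast
  then show ?thesis
    unfolding f_def .
qed

lemma matrix_square_cancel_field:
  fixes M W :: "'k::field^'n^'n" and Z :: "'k^'m^'n"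
  assumes "M = M ** M ** W" and "M ** M ** Z = 0"
  shows "M ** Z = 0"
proof -
  have "(M ** Z) *v x = 0" for x
  proof -
    have "M *v (M *v (Z *v x)) = (M ** M ** Z) *v x"
      by (simp add: matrix_vector_mul_assoc matrix_mul_assoc)
    then have "M *v (M *v (Z *v x)) = 0"
      using assms(2) by simp
    then have "M *v (Z *v x) = 0"
      by (rule matrix_square_kernel_field[OF assms(1)])
    then show ?thesis
      by (simp add: matrix_vector_mul_assoc)
  qed
  then show ?thesis
    by (metis matrix_eq matrix_vector_mult_0)
qed

lemma matrix_square_cancel:
  fixes M W :: "'a::idom^'n^'n" and Z :: "'a^'m^'n"
  assumes "M = M ** M ** W" and "M ** M ** Z = 0"
  shows "M ** Z = 0"
proof -
  let ?F = "map_matrix to_fract"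
  have "?F M = ?F M ** ?F M ** ?F W"
    using assms(1) by (metis map_matrix_to_fract_mult)
  moreover have "?F M ** ?F M ** ?F Z = 0"
    using assms(2) by (metis map_matrix_to_fract_mult map_matrix_to_fract_0)
  ultimately have "?F M ** ?F Z = 0"
    by (rule matrix_square_cancel_field)
  then have "?F (M ** Z) = ?F 0"
    by (simp add: map_matrix_to_fract_mult map_matrix_to_fract_0)
  then show ?thesis
    by (simp only: map_matrix_to_fract_eq_iff)
qed

definition group_inverse :: "'a::semiring_1^'n^'n \<Rightarrow> 'a^'n^'n \<Rightarrow> bool" where
  "group_inverse M G \<longleftrightarrow> M ** G ** M = M \<and> G ** M ** G = G \<and> M ** G = G ** M"

lemma group_inverse_exists:
  fixes M W :: "'a::idom^'n^'n"
  assumes MW: "M = M ** M ** W"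
  shows "\<exists>G. group_inverse M G"
proof -
  have MMW: "M ** M ** W = M"
    using MW by simp
  have "M ** M ** (W ** M - mat 1) = 0"
    by (simp add: matrix_diff_ldistrib matrix_mul_assoc MMW)
  then have "M ** (W ** M - mat 1) = 0"
    by (rule matrix_square_cancel[OF MW])
  then have MWM: "M ** W ** M = M"
    by (simp add: matrix_diff_ldistrib matrix_mul_assoc)
  have "M ** M ** (W ** W ** M - W) = 0"
    by (simp add: matrix_diff_ldistrib matrix_mul_assoc MMW MWM)
  then have "M ** (W ** W ** M - W) = 0"
    by (rule matrix_square_cancel[OF MW])
  then have MWWM: "M ** W ** W ** M = M ** W"
    by (simp add: matrix_diff_ldistrib matrix_mul_assoc)
  have "group_inverse M (M ** W ** W ** M ** W)"
    unfolding group_inverse_def by (simp add: matrix_mul_assoc MMW MWM MWWM)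
  then show ?thesis ..
qed

section \<open>Unimodular vectors over Bezout domains\<close>

lemma bezout_pair:
  fixes a b :: "'a::idom"
  assumes "bezout_domain TYPE('a)"
  obtains d p q a' b' where "p * a + q * b = d" "a = d * a'" "b = d * b'"
proof -
  let ?I = "{(\<Sum>x\<in>{a, b}. c x * x) | c. True}"
  obtain d where d: "?I = {d * r | r. True}"
    using assms unfolding bezout_domain_def by blast
  have "d \<in> ?I"
    unfolding d by (metis (mono_tags, lifting) mem_Collect_eq mult_1_right)
  then obtain c where c: "d = (\<Sum>x\<in>{a, b}. c x * x)"
    by blast
  have "a \<in> ?I" "b \<in> ?I"
    by (rule CollectI, rule exI[of _ "\<lambda>x. of_bool (x = a)"], cases "a = b"; simp)
      (rule CollectI, rule exI[of _ "\<lambda>x. of_bool (x = b)"], cases "a = b"; simp)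
  then obtain a' b' where "a = d * a'" "b = d * b'"
    unfolding d by blast
  moreover have "c a * a + (if a = b then 0 else c b) * b = d"
    \<comment> \<open>\<open>{a, b}\<close> is a singleton if \<open>a = b\<close>\<close>
    using c by (cases "a = b") auto
  ultimately show ?thesis
    using that by blast
qed

lemma bezout_domain_gcd_combination:
  fixes f :: "'i \<Rightarrow> 'a::idom"
  assumes "bezout_domain TYPE('a)" and "finite I"
  shows "\<exists>c. \<forall>i\<in>I. (\<Sum>j\<in>I. c j * f j) dvd f i"
  using assms(2)
proof (induction I rule: finite_induct)
  case empty
  then show ?case
    by simp
next
  case (insert i I)
  obtain c where c: "\<forall>j\<in>I. (\<Sum>k\<in>I. c k * f k) dvd f j"
    using insert.IH by blast
  obtain d p q a' b' where pq: "p * (\<Sum>k\<in>I. c k * f k) + q * f i = d"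
    "(\<Sum>k\<in>I. c k * f k) = d * a'" "f i = d * b'"
    using bezout_pair[OF assms(1)] .
  define c' where "c' k = (if k = i then q else p * c k)" for k
  have "(\<Sum>k\<in>insert i I. c' k * f k) = q * f i + (\<Sum>k\<in>I. p * (c k * f k))"
    using insert.hyps by (auto simp: c'_def mult.assoc intro!: sum.cong)
  also have "\<dots> = d"
    using pq(1) by (simp add: sum_distrib_left algebra_simps)
  finally have "(\<Sum>k\<in>insert i I. c' k * f k) = d" .
  moreover have "\<forall>j\<in>insert i I. d dvd f j"
    using c pq(2,3) by (metis dvd_mult_left dvd_trans dvd_triv_left insert_iff)
  ultimately show ?case
    by metis
qed

definition unimodular :: "'a::comm_ring_1^'n \<Rightarrow> bool" where
  "unimodular w \<longleftrightarrow> (\<exists>c. (\<Sum>i\<in>UNIV. c i * w $ i) = 1)"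

lemma vector_eq_scale_unimodular:
  fixes v :: "'a::idom^'n"
  assumes "bezout_domain TYPE('a)" and "v \<noteq> 0"
  obtains d w where "d \<noteq> 0" "v = d *s w" "unimodular w"
proof -
  obtain c where c: "\<forall>i. (\<Sum>j\<in>UNIV. c j * v $ j) dvd v $ i"
    using bezout_domain_gcd_combination[OF assms(1) finite_class.finite_UNIV, of "\<lambda>j. v $ j"] by auto
  define d where "d = (\<Sum>j\<in>UNIV. c j * v $ j)"
  obtain w where w: "v = d *s w"
    using c unfolding d_def[symmetric] dvd_def by (metis vec_lambda_beta vec_eq_iff vector_smult_component)
  have "d \<noteq> 0"
    using assms(2) w by auto
  moreover have "d * (\<Sum>j\<in>UNIV. c j * w $ j) = d * 1"
    using d_def w by (simp add: sum_distrib_left mult.left_commute)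
  ultimately have "unimodular w"
    unfolding unimodular_def by auto
  with \<open>d \<noteq> 0\<close> w that show ?thesis
    by blast
qed

lemma unimodular_invertible_mult:
  fixes U U' :: "'a::comm_ring_1^'n^'n"
  assumes "unimodular w" and "U' ** U = mat 1"
  shows "unimodular (U *v w)"
proof -
  obtain c where c: "(\<Sum>i\<in>UNIV. c i * w $ i) = 1"
    using assms(1) unfolding unimodular_def by blast
  let ?y = "U *v w"
  have w: "w = U' *v ?y"
    by (simp add: matrix_vector_mul_assoc assms(2))
  have "(\<Sum>i\<in>UNIV. c i * w $ i) = (\<Sum>i\<in>UNIV. c i * (\<Sum>k\<in>UNIV. U' $ i $ k * ?y $ k))"
    by (subst w) (simp add: matrix_vector_mult_def)
  also have "\<dots> = (\<Sum>k\<in>UNIV. \<Sum>i\<in>UNIV. c i * U' $ i $ k * ?y $ k)"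
    by (subst sum.swap) (simp add: sum_distrib_left mult.assoc)
  also have "\<dots> = (\<Sum>k\<in>UNIV. (\<Sum>i\<in>UNIV. c i * U' $ i $ k) * ?y $ k)"
    by (simp add: sum_distrib_right)
  finally show ?thesis
    unfolding unimodular_def using c by auto
qed

definition identity_on :: "'n set \<Rightarrow> 'a::semiring_1^'n^'n \<Rightarrow> bool" where
  "identity_on S M \<longleftrightarrow> (\<forall>i j. i \<in> S \<or> j \<in> S \<longrightarrow> M $ i $ j = mat 1 $ i $ j)"

lemma identity_on_mult:
  fixes A B :: "'a::semiring_1^'n::finite^'n"
  assumes A: "identity_on S A" and B: "identity_on S B"
  shows "identity_on S (A ** B)"
  unfolding identity_on_def
proof (intro allI impI)
  fix i j assume "i \<in> S \<or> j \<in> S"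
  then consider "i \<in> S" | "j \<in> S"
    by blast
  then show "(A ** B) $ i $ j = mat 1 $ i $ j"
  proof cases
    case 1
    then have "(A ** B) $ i $ j = A $ i $ i * B $ i $ j"
      using A unfolding matrix_matrix_mult_nth identity_on_def by (intro sum_UNIV_single) (simp add: mat_def)
    then show ?thesis
      using 1 A B by (simp add: identity_on_def mat_def)
  next
    case 2
    then have "(A ** B) $ i $ j = A $ i $ j * B $ j $ j"
      using B unfolding matrix_matrix_mult_nth identity_on_def by (intro sum_UNIV_single) (simp add: mat_def)
    then show ?thesis
      using 2 A B by (simp add: identity_on_def mat_def)
  qed
qed

lemma identity_on_diag_matrix: "(\<And>r. r \<in> S \<Longrightarrow> f r = 1) \<Longrightarrow> identity_on S (diag_matrix f)"
  by (simp add: identity_on_def diag_matrix_def mat_def)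

definition plane_matrix :: "'n \<Rightarrow> 'n \<Rightarrow> 'a \<Rightarrow> 'a \<Rightarrow> 'a \<Rightarrow> 'a \<Rightarrow> 'a::semiring_1^'n^'n" where
  "plane_matrix i j x y z u = (\<chi> r s.
     if r = i then (if s = i then x else if s = j then y else 0)
     else if r = j then (if s = i then z else if s = j then u else 0)
     else mat 1 $ r $ s)"

lemma plane_matrix_mult_vector:
  fixes i j :: "'n::finite"
  assumes "i \<noteq> j"
  shows "(plane_matrix i j x y z u *v w) $ r =
    (if r = i then x * w $ i + y * w $ j else if r = j then z * w $ i + u * w $ j else w $ r)"
proof (cases "r = i \<or> r = j")
  case True
  then show ?thesis
    using assms unfolding matrix_vector_mult_def vec_lambda_beta
    by (subst sum_UNIV_pair[OF assms]) (auto simp: plane_matrix_def)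
next
  case False
  then show ?thesis
    unfolding matrix_vector_mult_def vec_lambda_beta
    by (subst sum_UNIV_single[of r]) (auto simp: plane_matrix_def mat_def)
qed

lemma plane_matrix_mult:
  fixes i j :: "'n::finite"
  assumes "i \<noteq> j"
  shows "plane_matrix i j x y z u ** plane_matrix i j x' y' z' u' =
    (plane_matrix i j (x * x' + y * z') (x * y' + y * u') (z * x' + u * z') (z * y' + u * u')
      :: 'a::comm_semiring_1^'n^'n)"
proof -
  have "(plane_matrix i j x y z u ** plane_matrix i j x' y' z' u') $ r $ s =
    (plane_matrix i j (x * x' + y * z') (x * y' + y * u') (z * x' + u * z') (z * y' + u * u')
      :: 'a^'n^'n) $ r $ s" for r s
  proof (cases "r = i \<or> r = j")
    case True
    then show ?thesis
      using assms unfolding matrix_matrix_mult_nth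
      by (subst sum_UNIV_pair[OF assms]) (auto simp: plane_matrix_def)
  next
    case False
    then show ?thesis
      unfolding matrix_matrix_mult_nth
      by (subst sum_UNIV_single[of r]) (auto simp: plane_matrix_def mat_def)
  qed
  then show ?thesis
    by (simp add: vec_eq_iff)
qed

lemma plane_matrix_id: "i \<noteq> j \<Longrightarrow> plane_matrix i j 1 0 0 1 = mat 1"
  by (auto simp: plane_matrix_def mat_def vec_eq_iff)

lemma identity_on_plane_matrix: "i \<notin> S \<Longrightarrow> j \<notin> S \<Longrightarrow> identity_on S (plane_matrix i j x y z u)"
  by (auto simp: identity_on_def plane_matrix_def mat_def)

lemma unimodular_plane_reduction:
  fixes w :: "'a::idom^'n"
  assumes bez: "bezout_domain TYPE('a)" and ij: "i \<noteq> j" "i \<notin> S" "j \<notin> S" and wi: "w $ i \<noteq> 0"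
  obtains U U' where "U ** U' = mat 1" "U' ** U = mat 1" "identity_on S U" "identity_on S U'"
    "{r. (U *v w) $ r \<noteq> 0} = {r. w $ r \<noteq> 0} - {j}"
proof -
  obtain d p q a' b' where bz: "p * w $ i + q * w $ j = d" "w $ i = d * a'" "w $ j = d * b'"
    using bezout_pair[OF bez] .
  have "d \<noteq> 0"
    using bz(2) wi by auto
  moreover have "d * (p * a' + q * b') = d * 1"
    using bz by (simp add: algebra_simps)
  ultimately have pq: "p * a' + q * b' = 1"
    by simp
  define U where "U = (plane_matrix i j p q (- b') a' :: 'a^'n^'n)"
  define U' where "U' = (plane_matrix i j a' (- q) b' p :: 'a^'n^'n)"
  have "U ** U' = mat 1" "U' ** U = mat 1"
    unfolding U_def U'_def plane_matrix_mult[OF ij(1)] using pq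
    by (simp_all add: plane_matrix_id[OF ij(1), symmetric] algebra_simps)
  moreover have "identity_on S U" "identity_on S U'"
    using ij by (simp_all add: U_def U'_def identity_on_plane_matrix)
  moreover have "(U *v w) $ r = (if r = i then d else if r = j then 0 else w $ r)" for r
    unfolding U_def plane_matrix_mult_vector[OF ij(1)] using bz by (auto simp: algebra_simps)
  then have "{r. (U *v w) $ r \<noteq> 0} = {r. w $ r \<noteq> 0} - {j}"
    using \<open>d \<noteq> 0\<close> wi ij(1) by auto
  ultimately show ?thesis
    using that by blast
qed

lemma unimodular_single_support:
  fixes w :: "'a::comm_ring_1^'n"
  assumes "unimodular w" and supp: "\<And>r. r \<noteq> t \<Longrightarrow> w $ r = 0" and "t \<notin> S"
  obtains U U' where "U ** U' = mat 1" "U' ** U = mat 1" "identity_on S U" "identity_on S U'"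
    "U *v w = axis t 1"
proof -
  obtain c where "(\<Sum>i\<in>UNIV. c i * w $ i) = 1"
    using assms(1) unfolding unimodular_def by blast
  then have ct: "c t * w $ t = 1"
    using supp by (subst (asm) sum_UNIV_single[of t]) auto
  define U where "U = (diag_matrix (\<lambda>r. if r = t then c t else 1) :: 'a^'n^'n)"
  define U' where "U' = (diag_matrix (\<lambda>r. if r = t then w $ t else 1) :: 'a^'n^'n)"
  have "U ** U' = diag_matrix (\<lambda>_. 1)" "U' ** U = diag_matrix (\<lambda>_. 1)"
    using ct by (simp_all add: U_def U'_def diag_matrix_mult mult.commute if_distrib cong: if_cong)
  moreover have "identity_on S U" "identity_on S U'"
    using \<open>t \<notin> S\<close> by (auto simp: U_def U'_def intro!: identity_on_diag_matrix)
  moreover have "U *v w = axis t 1"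
    using ct supp by (simp add: U_def diag_matrix_mult_vector vec_eq_iff axis_def)
  ultimately show ?thesis
    using that by (simp add: diag_matrix_one)
qed

lemma unimodular_to_axis:
  fixes w :: "'a::idom^'n"
  assumes bez: "bezout_domain TYPE('a)" and "unimodular w" and "\<forall>i\<in>S. w $ i = 0"
  shows "\<exists>U U' t. t \<notin> S \<and> U ** U' = mat 1 \<and> U' ** U = mat 1 \<and>
    identity_on S U \<and> identity_on S U' \<and> U *v w = axis t 1"
  using assms(2,3)
proof (induction "card {i. w $ i \<noteq> 0}" arbitrary: w rule: less_induct)
  case less
  have "w \<noteq> 0"
    using less.prems(1) by (auto simp: unimodular_def)
  then obtain i where wi: "w $ i \<noteq> 0"
    by (auto simp: vec_eq_iff)
  then have iS: "i \<notin> S"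
    using less.prems(2) by auto
  show ?case
  proof (cases "\<exists>j. i \<noteq> j \<and> w $ j \<noteq> 0")
    case True
    then obtain j where j: "i \<noteq> j" "w $ j \<noteq> 0"
      by blast
    then have "j \<notin> S"
      using less.prems(2) by auto
    obtain U1 U1' where U1: "U1 ** U1' = mat 1" "U1' ** U1 = mat 1" "identity_on S U1" "identity_on S U1'"
      and supp: "{r. (U1 *v w) $ r \<noteq> 0} = {r. w $ r \<noteq> 0} - {j}"
      using unimodular_plane_reduction[OF bez j(1) iS \<open>j \<notin> S\<close> wi] .
    have "card {r. (U1 *v w) $ r \<noteq> 0} < card {r. w $ r \<noteq> 0}"
      unfolding supp using j(2) by (intro card_Diff1_less) auto
    moreover have "unimodular (U1 *v w)"
      by (rule unimodular_invertible_mult[OF less.prems(1) U1(2)])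
    moreover have "\<forall>r\<in>S. (U1 *v w) $ r = 0"
      using supp less.prems(2) by blast
    ultimately obtain U2 U2' t where U2: "t \<notin> S" "U2 ** U2' = mat 1" "U2' ** U2 = mat 1"
      "identity_on S U2" "identity_on S U2'" "U2 *v (U1 *v w) = axis t 1"
      using less.hyps by blast
    have "U2 ** U1 ** (U1' ** U2') = mat 1" "U1' ** U2' ** (U2 ** U1) = mat 1"
      using U1 U2 by (simp_all add: matrix_mul_inverse_mult)
    moreover have "identity_on S (U2 ** U1)" "identity_on S (U1' ** U2')"
      using U1 U2 by (simp_all add: identity_on_mult)
    moreover have "(U2 ** U1) *v w = axis t 1"
      using U2(6) by (simp add: matrix_vector_mul_assoc)
    ultimately show ?thesis
      using U2(1) by blast
  next
    case False
    then have "\<And>r. r \<noteq> i \<Longrightarrow> w $ r = 0"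
      by auto
    then obtain U U' where "U ** U' = mat 1" "U' ** U = mat 1" "identity_on S U" "identity_on S U'"
      "U *v w = axis i 1"
      using unimodular_single_support[OF less.prems(1) _ iS] by blast
    then show ?thesis
      using iS by blast
  qed
qed

section \<open>Idempotent matrices over Bezout domains\<close>

lemma idempotent_fixing_axis_split:
  fixes F :: "'a::comm_ring_1^'n::finite^'n"
  assumes FF: "F ** F = F" and F_S: "identity_on S F" and "t \<notin> S"
    and Ft: "F *v axis t 1 = axis t 1"
  shows "\<exists>F'. similar_matrix F' F \<and> identity_on (insert t S) F'"
proof -
  let ?E = "coord_proj {t} :: 'a^'n^'n"
  txt \<open>\<open>R\<close> is row \<open>t\<close> of \<open>F - 1\<close>; it squares to zero, and conjugating by \<open>1 + R\<close> clears
    row \<open>t\<close> of \<open>F\<close> while column \<open>t\<close> is already a unit vector.\<close>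
  define R where "R = ?E ** (F - mat 1)"
  have col: "F $ r $ t = mat 1 $ r $ t" for r
    using arg_cong[OF Ft, of "\<lambda>v. v $ r"] unfolding matrix_vector_mult_axis_nth
    by (simp add: axis_def mat_def)
  have FE_E: "F ** ?E = ?E"
    using col by (simp add: coord_proj_def diag_matrix_mult_right) (simp add: vec_eq_iff diag_matrix_def mat_def)
  then have FE: "(F - mat 1) ** ?E = 0"
    by (simp add: matrix_diff_rdistrib)
  have "R ** R = ?E ** ((F - mat 1) ** ?E) ** (F - mat 1)"
    by (simp add: R_def matrix_mul_assoc)
  then have RR: "R ** R = 0"
    by (simp add: FE)
  have FR: "F ** R = R"
    unfolding R_def by (simp add: matrix_mul_assoc FE_E)
  have RF: "R ** F = 0"
    unfolding R_def by (simp add: FF matrix_diff_rdistrib flip: matrix_mul_assoc)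
  have "(mat 1 + R) ** (mat 1 - R) = mat 1" "(mat 1 - R) ** (mat 1 + R) = mat 1"
    by (simp_all add: matrix_diff_ldistrib matrix_add_rdistrib matrix_add_ldistrib matrix_diff_rdistrib RR)
  moreover have "(mat 1 + R) ** F ** (mat 1 - R) = F - R"
    by (simp add: matrix_diff_ldistrib matrix_add_rdistrib RF FR)
  ultimately have "similar_matrix (F - R) F"
    by (metis similar_matrix_conj)
  moreover have "identity_on (insert t S) (F - R)"
    unfolding identity_on_def
  proof (intro allI impI)
    fix a b assume "a \<in> insert t S \<or> b \<in> insert t S"
    then consider "a \<in> S" | "b \<in> S" | "a = t" | "b = t"
      by auto
    moreover have "R $ a $ b = (if a = t then F $ t $ b - mat 1 $ t $ b else 0)"
      by (simp add: R_def coord_proj_def diag_matrix_mult_left)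
    ultimately show "(F - R) $ a $ b = mat 1 $ a $ b"
      using F_S \<open>t \<notin> S\<close> col unfolding identity_on_def by cases auto
  qed
  ultimately show ?thesis
    by blast
qed

lemma idempotent_split_coordinate:
  fixes F :: "'a::idom^'n^'n"
  assumes bez: "bezout_domain TYPE('a)" and FF: "F ** F = F" and F_S: "identity_on S F"
    and ij: "i \<notin> S" "j \<notin> S" "F $ i $ j \<noteq> 0"
  shows "\<exists>t F'. t \<notin> S \<and> similar_matrix F' F \<and> identity_on (insert t S) F'"
proof -
  define v where "v = F *v axis j 1"
  have "v \<noteq> 0"
    using ij(3) by (auto simp: v_def vec_eq_iff matrix_vector_mult_axis_nth)
  then obtain d w where dw: "d \<noteq> 0" "v = d *s w" "unimodular w"
    using vector_eq_scale_unimodular[OF bez] by blast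
  have "\<forall>r\<in>S. w $ r = 0"
  proof
    fix r assume "r \<in> S"
    then have "v $ r = 0"
      using F_S ij(2) by (auto simp: v_def matrix_vector_mult_axis_nth identity_on_def mat_def)
    then show "w $ r = 0"
      using dw by simp
  qed
  then obtain U U' t where U: "t \<notin> S" "U ** U' = mat 1" "U' ** U = mat 1"
    "identity_on S U" "identity_on S U'" "U *v w = axis t 1"
    using unimodular_to_axis[OF bez dw(3)] by blast
  have "F *v v = v"
    by (simp add: v_def matrix_vector_mul_assoc FF)
  then have "d *s (F *v w) = d *s w"
    using dw(2) by (simp add: vec_eq_iff matrix_vector_mult_def sum_distrib_left mult.left_commute)
  then have Fw: "F *v w = w"
    using dw(1) by (simp add: vec_eq_iff)
  define F1 where "F1 = U ** F ** U'"
  have F1_F: "similar_matrix F1 F"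
    unfolding F1_def using U(2,3) by (rule similar_matrix_conj)
  have "F1 *v axis t 1 = U *v (F *v ((U' ** U) *v w))"
    by (simp add: F1_def U(6)[symmetric] matrix_vector_mul_assoc matrix_mul_assoc)
  then have "F1 *v axis t 1 = axis t 1"
    using U(3,6) Fw by simp
  moreover have "identity_on S F1"
    unfolding F1_def using U(4,5) F_S by (simp add: identity_on_mult)
  ultimately obtain F' where "similar_matrix F' F1" "identity_on (insert t S) F'"
    using idempotent_fixing_axis_split similar_matrix_idempotent[OF F1_F FF] U(1) by blast
  then show ?thesis
    using U(1) similar_matrix_trans F1_F by blast
qed

lemma idempotent_similar_coord_proj:
  fixes F :: "'a::idom^'n^'n"
  assumes bez: "bezout_domain TYPE('a)" and "F ** F = F"
  shows "\<exists>S. similar_matrix F (coord_proj S)"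
proof -
  have "\<exists>T. similar_matrix F (coord_proj T)"
    if "F ** F = F" "identity_on S F" for S and F :: "'a^'n^'n"
    using that
  proof (induction "card (- S)" arbitrary: S F rule: less_induct)
    case less
    show ?case
    proof (cases "\<exists>i j. i \<notin> S \<and> j \<notin> S \<and> F $ i $ j \<noteq> 0")
      case True
      then obtain i j where "i \<notin> S" "j \<notin> S" "F $ i $ j \<noteq> 0"
        by blast
      then obtain t F' where F': "t \<notin> S" "similar_matrix F' F" "identity_on (insert t S) F'"
        using idempotent_split_coordinate[OF bez less.prems] by blast
      have "card (- insert t S) < card (- S)"
        using F'(1) by (metis Compl_insert card_Diff1_less finite_class.finite_UNIV
            finite_subset subset_UNIV ComplI)
      moreover have "F' ** F' = F'"
        using similar_matrix_idempotent[OF F'(2) less.prems(1)] .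
      ultimately obtain T where "similar_matrix F' (coord_proj T)"
        using less.hyps F'(3) by blast
      then show ?thesis
        using similar_matrix_trans similar_matrix_sym F'(2) by blast
    next
      case False
      have "F $ a $ b = coord_proj S $ a $ b" for a b
        using False less.prems(2) by (cases "a \<in> S \<or> b \<in> S")
          (auto simp: coord_proj_def diag_matrix_def identity_on_def mat_def)
      then have "F = coord_proj S"
        by (simp add: vec_eq_iff)
      then show ?thesis
        using similar_matrix_refl by blast
    qed
  qed
  moreover have "identity_on {} F"
    by (simp add: identity_on_def)
  ultimately show ?thesis
    using assms(2) by blast
qed

section \<open>Equivalent idempotents\<close>

text \<open>Murray--von Neumann equivalence of the idempotents \<open>E\<close> and \<open>F\<close>, witnessed by
  \<open>\<alpha> \<in> E R F\<close> and \<open>\<beta> \<in> F R E\<close>.\<close>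

definition mvn_equiv :: "'a::semiring_1^'n^'n \<Rightarrow> 'a^'n^'n \<Rightarrow> 'a^'n^'n \<Rightarrow> 'a^'n^'n \<Rightarrow> bool" where
  "mvn_equiv \<alpha> \<beta> E F \<longleftrightarrow> E ** E = E \<and> F ** F = F \<and> \<alpha> ** \<beta> = E \<and> \<beta> ** \<alpha> = F \<and>
     E ** \<alpha> ** F = \<alpha> \<and> F ** \<beta> ** E = \<beta>"

lemma mvn_equiv_sym: "mvn_equiv \<alpha> \<beta> E F \<Longrightarrow> mvn_equiv \<beta> \<alpha> F E"
  by (simp add: mvn_equiv_def)

lemma mvn_equiv_absorb:
  fixes \<alpha> :: "'a::semiring_1^'n::finite^'n"
  assumes "mvn_equiv \<alpha> \<beta> E F"
  shows "E ** \<alpha> = \<alpha>" "\<alpha> ** F = \<alpha>"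
proof -
  have EE: "E ** E = E" and FF: "F ** F = F" and \<alpha>: "E ** \<alpha> ** F = \<alpha>"
    using assms by (simp_all add: mvn_equiv_def)
  have "E ** \<alpha> = (E ** E) ** \<alpha> ** F"
    by (metis \<alpha> matrix_mul_assoc)
  then show "E ** \<alpha> = \<alpha>"
    using EE \<alpha> by simp
  have "\<alpha> ** F = E ** \<alpha> ** (F ** F)"
    by (metis \<alpha> matrix_mul_assoc)
  then show "\<alpha> ** F = \<alpha>"
    using FF \<alpha> by simp
qed

lemma mvn_equiv_conj:
  fixes V V' W W' :: "'a::semiring_1^'n::finite^'n"
  assumes "mvn_equiv \<alpha> \<beta> E F" and "V' ** V = mat 1" and "W' ** W = mat 1"
  shows "mvn_equiv (V ** \<alpha> ** W') (W ** \<beta> ** V') (V ** E ** V') (W ** F ** W')"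
  using assms unfolding mvn_equiv_def by (simp add: matrix_mul_conj_cancel)

lemma mvn_equiv_inverse_extension:
  fixes \<alpha> :: "'a::semiring_1^'n::finite^'n"
  assumes ab: "mvn_equiv \<alpha> \<beta> E F" and T: "T ** T' = mat 1" "T' ** T = mat 1"
    and ext: "F ** T = \<beta>" "T ** E = \<beta>"
  shows "E ** T' = \<alpha>" "T' ** F = \<alpha>"
proof -
  have "\<alpha> ** T = \<alpha> ** \<beta>"
    using mvn_equiv_absorb(2)[OF ab] ext(1) by (metis matrix_mul_assoc)
  then have "\<alpha> = E ** T'"
    using ab T(1) unfolding mvn_equiv_def by (metis matrix_mul_assoc matrix_mul_rid)
  then show "E ** T' = \<alpha>"
    by simp
  have "T ** \<alpha> = \<beta> ** \<alpha>"
    using mvn_equiv_absorb(1)[OF ab] ext(2) by (metis matrix_mul_assoc)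
  then have "\<alpha> = T' ** F"
    using ab T(2) unfolding mvn_equiv_def by (metis matrix_mul_assoc matrix_mul_lid)
  then show "T' ** F = \<alpha>"
    by simp
qed

lemma coord_proj_mvn_equiv_extends_le:
  fixes a b :: "'a::idom^'n^'n"
  assumes ab: "mvn_equiv a b (coord_proj S1) (coord_proj S2)" and card: "card (- S2) \<le> card (- S1)"
  shows "\<exists>T T'. T ** T' = mat 1 \<and> T' ** T = mat 1 \<and> coord_proj S1 ** T = a \<and> T ** coord_proj S2 = a"
proof -
  obtain \<sigma> where \<sigma>: "\<sigma> ` (- S2) \<subseteq> - S1" "inj_on \<sigma> (- S2)"
    using card_le_inj[OF _ _ card] by auto
  txt \<open>The partial permutation \<open>J\<close> identifies the complement of \<open>S2\<close> with part of the
    complement of \<open>S1\<close>; it fills in \<open>a\<close> where \<open>a\<close> vanishes.\<close>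
  define J where "J = (\<chi> i j. if j \<notin> S2 \<and> i = \<sigma> j then 1 else (0::'a))"
  have J_nz: "J $ i $ j \<noteq> 0 \<Longrightarrow> j \<notin> S2 \<and> i = \<sigma> j \<and> i \<notin> S1" for i j
    using \<sigma>(1) by (auto simp: J_def split: if_splits)
  have D1J: "coord_proj S1 ** J = 0"
    using J_nz by (fastforce simp: coord_proj_def diag_matrix_mult_left vec_eq_iff)
  have JD2: "J ** coord_proj S2 = 0"
    using J_nz by (fastforce simp: coord_proj_def diag_matrix_mult_right vec_eq_iff)
  have JtD1: "transpose J ** coord_proj S1 = 0"
    using J_nz by (fastforce simp: coord_proj_def diag_matrix_mult_right vec_eq_iff transpose_def)
  have "(transpose J ** J) $ i $ j = (mat 1 - coord_proj S2) $ i $ j" for i j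
  proof -
    have "(transpose J ** J) $ i $ j = J $ (\<sigma> i) $ i * J $ (\<sigma> i) $ j"
      unfolding matrix_matrix_mult_nth transpose_def vec_lambda_beta
      by (rule sum_UNIV_single) (auto simp: J_def)
    then show ?thesis
      using \<sigma>(2) by (auto simp: J_def coord_proj_def diag_matrix_def mat_def inj_on_def)
  qed
  then have JtJ: "transpose J ** J = mat 1 - coord_proj S2"
    by (simp add: vec_eq_iff)
  have bJ: "b ** J = 0"
    using ab D1J unfolding mvn_equiv_def by (metis matrix_mul_assoc times0_right)
  have Jta: "transpose J ** a = 0"
    using ab JtD1 unfolding mvn_equiv_def by (metis matrix_mul_assoc times0_left)
  define T where "T = a + J"
  define T' where "T' = b + transpose J"
  have "T' ** T = mat 1"
    using ab unfolding T_def T'_def mvn_equiv_def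
    by (simp add: matrix_add_ldistrib matrix_add_rdistrib bJ Jta JtJ)
  moreover have "T ** T' = mat 1"
    using calculation matrix_left_right_inverse_idom by blast
  moreover have "coord_proj S1 ** T = a" "T ** coord_proj S2 = a"
    using mvn_equiv_absorb[OF ab] D1J JD2
    by (simp_all add: T_def matrix_add_ldistrib matrix_add_rdistrib)
  ultimately show ?thesis
    by blast
qed

lemma coord_proj_mvn_equiv_extends:
  fixes a b :: "'a::idom^'n^'n"
  assumes ab: "mvn_equiv a b (coord_proj S1) (coord_proj S2)"
  shows "\<exists>T T'. T ** T' = mat 1 \<and> T' ** T = mat 1 \<and> coord_proj S1 ** T = a \<and> T ** coord_proj S2 = a"
proof (cases "card (- S2) \<le> card (- S1)")
  case True
  then show ?thesis
    using coord_proj_mvn_equiv_extends_le[OF ab] by blast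
next
  case False
  then obtain T T' where T: "T ** T' = mat 1" "T' ** T = mat 1"
    "coord_proj S2 ** T = b" "T ** coord_proj S1 = b"
    using coord_proj_mvn_equiv_extends_le[OF mvn_equiv_sym[OF ab]] by auto
  then show ?thesis
    using mvn_equiv_inverse_extension[OF ab T] by blast
qed

lemma mvn_equiv_extends_to_invertible:
  fixes \<alpha> \<beta> E F :: "'a::idom^'n^'n"
  assumes bez: "bezout_domain TYPE('a)" and ab: "mvn_equiv \<alpha> \<beta> E F"
  shows "\<exists>T T'. T ** T' = mat 1 \<and> T' ** T = mat 1 \<and> E ** T = \<alpha> \<and> T ** F = \<alpha>"
proof -
  have "E ** E = E" "F ** F = F"
    using ab by (simp_all add: mvn_equiv_def)
  then obtain S1 S2 where "similar_matrix E (coord_proj S1)" "similar_matrix F (coord_proj S2)"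
    using idempotent_similar_coord_proj[OF bez] by metis
  then obtain V V' W W' where
    V: "V ** V' = mat 1" "V' ** V = mat 1" "E = V' ** coord_proj S1 ** V" and
    W: "W ** W' = mat 1" "W' ** W = mat 1" "F = W' ** coord_proj S2 ** W"
    unfolding similar_matrix_def by blast
  have "V ** E ** V' = coord_proj S1" "W ** F ** W' = coord_proj S2"
    using V W by (simp_all add: matrix_mul_assoc matrix_mul_inverse_cancel)
  then have "mvn_equiv (V ** \<alpha> ** W') (W ** \<beta> ** V') (coord_proj S1) (coord_proj S2)"
    using mvn_equiv_conj[OF ab V(2) W(2)] by simp
  then obtain T0 T0' where T0: "T0 ** T0' = mat 1" "T0' ** T0 = mat 1"
    "coord_proj S1 ** T0 = V ** \<alpha> ** W'" "T0 ** coord_proj S2 = V ** \<alpha> ** W'"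
    using coord_proj_mvn_equiv_extends by blast
  have unconj: "V' ** (V ** \<alpha> ** W') ** W = \<alpha>"
    using V W by (simp add: matrix_mul_assoc matrix_mul_inverse_cancel)
  have "(V' ** T0 ** W) ** (W' ** T0' ** V) = mat 1" "(W' ** T0' ** V) ** (V' ** T0 ** W) = mat 1"
    using T0 V W by (simp_all add: matrix_mul_conj_cancel)
  moreover have "E ** (V' ** T0 ** W) = \<alpha>" "(V' ** T0 ** W) ** F = \<alpha>"
    using V W T0 unconj by (simp_all add: matrix_mul_conj_cancel)
  ultimately show ?thesis
    by blast
qed

lemma similar_matrix_if_mvn_equiv_intertwines:
  fixes P Q \<alpha> :: "'a::idom^'n^'n"
  assumes bez: "bezout_domain TYPE('a)" and ab: "mvn_equiv \<alpha> \<beta> E F"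
    and "P ** E = P" "F ** Q = Q" and "P ** \<alpha> = \<alpha> ** Q"
  shows "similar_matrix P Q"
proof -
  obtain T T' where T: "T ** T' = mat 1" "T' ** T = mat 1" "E ** T = \<alpha>" "T ** F = \<alpha>"
    using mvn_equiv_extends_to_invertible[OF bez ab] by blast
  have "P ** T = T ** Q"
    using assms(3-5) T(3,4) by (metis matrix_mul_assoc)
  then have "P = T ** Q ** T'"
    using T(1) by (metis matrix_mul_assoc matrix_mul_rid)
  then show ?thesis
    unfolding similar_matrix_def using T(1,2) by blast
qed

lemma similar_matrix_if_group_invertible:
  fixes A C P Q X GP GQ :: "'a::idom^'n^'n"
  assumes bez: "bezout_domain TYPE('a)"
    and PA: "P ** A = A ** Q" and Q: "Q = C ** A" and P: "P = A ** Q ** X"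
    and GP: "group_inverse P GP" and GQ: "group_inverse Q GQ"
  shows "similar_matrix P Q"
proof -
  define E F where "E = P ** GP" and "F = Q ** GQ"
  define \<alpha> \<beta> where "\<alpha> = A ** F" and "\<beta> = Q ** X ** GP"
  have E: "E ** E = E" "E ** P = P" "P ** E = P"
    using GP unfolding E_def group_inverse_def by (metis matrix_mul_assoc)+
  have F: "F ** F = F" "F ** Q = Q" "Q ** F = Q" "GQ ** Q = F"
    using GQ unfolding F_def group_inverse_def by (metis matrix_mul_assoc)+
  have A\<beta>: "A ** \<beta> = E"
    unfolding \<beta>_def E_def using P by (metis matrix_mul_assoc)
  have \<alpha>\<beta>: "\<alpha> ** \<beta> = E"
    unfolding \<alpha>_def using A\<beta> F(2) \<beta>_def by (metis matrix_mul_assoc)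
  have E\<alpha>: "E ** \<alpha> = \<alpha>"
    unfolding \<alpha>_def F_def using E(2) PA by (metis matrix_mul_assoc)
  have \<alpha>F: "\<alpha> ** F = \<alpha>"
    unfolding \<alpha>_def using F(1) by (metis matrix_mul_assoc)
  have F\<beta>E: "F ** \<beta> ** E = \<beta>"
    unfolding \<beta>_def E_def using F(2) GP unfolding group_inverse_def by (metis matrix_mul_assoc)
  have \<beta>\<alpha>: "\<beta> ** \<alpha> = F"
  proof -
    define D where "D = \<beta> ** \<alpha> - F"
    have "A ** D = 0"
      unfolding D_def using A\<beta> E\<alpha> by (simp add: matrix_diff_ldistrib matrix_mul_assoc \<alpha>_def)
    then have "F ** D = 0"
      using F(4) Q by (metis matrix_mul_assoc times0_right)
    moreover have "F ** D = D"
      unfolding D_def using F(1,2) by (simp add: matrix_diff_ldistrib \<beta>_def matrix_mul_assoc)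
    ultimately show ?thesis
      unfolding D_def by simp
  qed
  have "mvn_equiv \<alpha> \<beta> E F"
    unfolding mvn_equiv_def using E(1) F(1) \<alpha>\<beta> \<beta>\<alpha> E\<alpha> \<alpha>F F\<beta>E by simp
  moreover have "P ** \<alpha> = \<alpha> ** Q"
    unfolding \<alpha>_def using PA F(2,3) by (metis matrix_mul_assoc)
  ultimately show ?thesis
    using similar_matrix_if_mvn_equiv_intertwines[OF bez _ E(3) F(2)] by blast
qed

lemma similar_matrix_if_cross_factorized:
  fixes A C P Q X Y :: "'a::idom^'n^'n"
  assumes bez: "bezout_domain TYPE('a)"
    and PA: "P ** A = A ** Q" and Q: "Q = C ** A"
    and P_AQX: "P = A ** Q ** X" and Q_CPY: "Q = C ** P ** Y"
  shows "similar_matrix P Q"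
proof -
  have "Q = C ** (A ** Q ** X) ** Y"
    using Q_CPY P_AQX by metis
  also have "\<dots> = Q ** Q ** (X ** Y)"
    by (simp add: Q matrix_mul_assoc)
  finally have Q_sq: "Q = Q ** Q ** (X ** Y)" .
  have "P = A ** (Q ** Q ** (X ** Y)) ** X"
    using P_AQX Q_sq by metis
  also have "\<dots> = P ** A ** Q ** X ** (Y ** X)"
    by (simp add: matrix_mul_assoc flip: PA)
  also have "\<dots> = P ** (A ** Q ** X) ** (Y ** X)"
    by (simp add: matrix_mul_assoc)
  finally have P_sq: "P = P ** P ** (Y ** X)"
    by (simp flip: P_AQX)
  obtain GP GQ where "group_inverse P GP" "group_inverse Q GQ"
    using group_inverse_exists[OF P_sq] group_inverse_exists[OF Q_sq] by blast
  then show ?thesis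
    using similar_matrix_if_group_invertible[OF bez PA Q P_AQX] by blast
qed

theorem theorem2p4:
  fixes A B C :: "'a::idom ^'n^'n"
  assumes "bezout_domain TYPE('a)"
    and "A ** B ** A = A ** C ** A"
    and "col_space (A ** B) = col_space (A ** B ** A)"
    and "col_space (C ** A) = col_space (C ** A ** B)"
  shows "similar_matrix (A ** B) (C ** A)"
proof -
  define P Q where "P = A ** B" and "Q = C ** A"
  obtain X where X: "P = P ** A ** X"
    using col_space_subset_imp_factor[of P "P ** A"] assms(3) unfolding P_def by auto
  obtain Y where Y: "Q = Q ** B ** Y"
    using col_space_subset_imp_factor[of Q "Q ** B"] assms(4) unfolding Q_def by auto
  have PA: "P ** A = A ** Q"
    using assms(2) by (simp add: P_def Q_def matrix_mul_assoc)
  moreover have "P = A ** Q ** X"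
    using X PA by simp
  moreover have "Q = C ** P ** Y"
    using Y by (simp add: P_def Q_def matrix_mul_assoc)
  ultimately have "similar_matrix P Q"
    using similar_matrix_if_cross_factorized[OF assms(1) _ Q_def] by blast
  then show ?thesis
    unfolding P_def Q_def .
qed

end
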